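(* Let $\phi:\mathbb{R}^n\to\mathbb{R}\cup\{+\infty\}$ be proper lsc convex, $(x^-,\chi,\varepsilon)\in\mathrm{dom}\,\phi\times[0,1)\times\mathbb{R}_{++}$, and let $(x,y,\Gamma,\lambda)$, with $x,y\in\mathrm{dom}\,\phi$, $\Gamma$ proper lsc convex, $\Gamma\le\phi$, $\lambda>0$, satisfy \[ \phi(y)+\frac{\chi}{2\lambda}\|y-x^-\|^2-\min_{u}\left\{\Gamma(u)+\frac1{2\lambda}\|u-x^-\|^2\right\}\le\varepsilon,\qquad x=\mathrm{argmin}_{u}\left\{\Gamma(u)+\frac1{2\lambda}\|u-x^-\|^2\right\}. \] Define $s:=(x^--x)/\lambda$ and $\eta:=\phi(y)-\Gamma(x)-\langle s,y-x\rangle$. Then: (a) $s\in\partial\Gamma(x)$, i.e. $\Gamma(u)\ge\Gamma(x)+\langle s,u-x\rangle$ for all $u\in\mathbb{R}^n$; (b) $s\in\partial_\eta\phi(y)$ and $0\le2\lambda\eta\le2\lambda\varepsilon-\|y-x\|^2+(1-\chi)\|y-x^-\|^2$.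
   Context: For $\eta\ge0$, $\partial_\eta\phi(y)=\{v:\phi(u)\ge\phi(y)+\langle v,u-y\rangle-\eta\ \forall u\in\mathbb{R}^n\}$. *)

theory Defs
  imports "HOL-Analysis.Analysis"
begin

definition edom :: "('a \<Rightarrow> ereal) \<Rightarrow> 'a set" where
  "edom f = {x. f x < \<infinity>}"

definition proper_fun :: "('a \<Rightarrow> ereal) \<Rightarrow> bool" where
  "proper_fun f \<longleftrightarrow> (\<forall>x. f x \<noteq> -\<infinity>) \<and> (\<exists>x. f x < \<infinity>)"

definition lsc_fun :: "('a::topological_space \<Rightarrow> ereal) \<Rightarrow> bool" where
  "lsc_fun f \<longleftrightarrow> (\<forall>x. f x \<le> Liminf (at x) f)"

definition convex_fun :: "('a::real_vector \<Rightarrow> ereal) \<Rightarrow> bool" where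
  "convex_fun f \<longleftrightarrow> (\<forall>x y t. 0 < t \<and> t < 1 \<longrightarrow>
      f ((1 - t) *\<^sub>R x + t *\<^sub>R y) \<le> ereal (1 - t) * f x + ereal t * f y)"

definition eps_subdiff :: "('a::real_inner \<Rightarrow> ereal) \<Rightarrow> real \<Rightarrow> 'a \<Rightarrow> 'a set" where
  "eps_subdiff f \<eta> y = {v. \<forall>u. f u \<ge> f y + ereal (inner v (u - y) - \<eta>)}"

end

theory Submission
  imports Defs
begin

text \<open>Testing the minimality of \<open>x\<close> against the points \<open>x + t (u - x)\<close>, convexity of \<open>\<Gamma>\<close> and
  \<open>t \<rightarrow> 0\<close> show that \<open>s = (x\<^sup>- - x) / \<lambda>\<close> is a subgradient of \<open>\<Gamma>\<close> at \<open>x\<close>.  Since \<open>\<Gamma> \<le> \<phi>\<close>, the affine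
  minorant \<open>\<Gamma> x + \<langle>s, u - x\<rangle>\<close> of \<open>\<Gamma>\<close> is also one of \<open>\<phi>\<close>, and it lies exactly \<open>\<eta>\<close> below \<open>\<phi>\<close> at \<open>y\<close>;
  this is \<open>s \<in> \<partial>\<^sub>\<eta>\<phi>(y)\<close>.  The bound on \<open>2\<lambda>\<eta>\<close> is the gap hypothesis rewritten with the
  identity \<open>\<parallel>y - x\<^sup>-\<parallel>\<^sup>2 = \<parallel>x - x\<^sup>-\<parallel>\<^sup>2 + 2\<langle>x - x\<^sup>-, y - x\<rangle> + \<parallel>y - x\<parallel>\<^sup>2\<close>.\<close>

lemma nonneg_if_ge_vanishing:
  fixes D c :: real
  assumes "\<And>t. 0 < t \<Longrightarrow> t < 1 \<Longrightarrow> - t * c \<le> D"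
  shows "0 \<le> D"
proof (rule tendsto_le[OF trivial_limit_at_right_real])
  show "((\<lambda>_. D) \<longlongrightarrow> D) (at_right 0)" by simp
  show "((\<lambda>t. - t * c) \<longlongrightarrow> 0) (at_right (0::real))"
    by (auto intro!: tendsto_eq_intros)
  show "\<forall>\<^sub>F t in at_right 0. - t * c \<le> D"
    using assms by (auto simp: eventually_at_right_field intro!: exI[of _ 1])
qed

lemma norm_add_scaleR_power2:
  fixes a b :: "'a::real_inner"
  shows "(norm (a + t *\<^sub>R b))\<^sup>2 = (norm a)\<^sup>2 + 2 * t * inner a b + t\<^sup>2 * (norm b)\<^sup>2"
  unfolding power2_norm_eq_inner
  by (simp add: inner_add_left inner_add_right inner_commute power2_eq_square algebra_simps)

lemma proper_fun_finite_at_prox_point: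
  fixes f :: "'a::real_normed_vector \<Rightarrow> ereal"
  assumes "proper_fun f"
    and min: "\<And>u. f x + ereal ((norm (x - z))\<^sup>2 / (2 * lam))
                    \<le> f u + ereal ((norm (u - z))\<^sup>2 / (2 * lam))"
  obtains G where "f x = ereal G"
proof -
  obtain w where "f w < \<infinity>" using assms(1) by (auto simp: proper_fun_def)
  then have "f w + ereal ((norm (w - z))\<^sup>2 / (2 * lam)) < \<infinity>" by simp
  then have "f x + ereal ((norm (x - z))\<^sup>2 / (2 * lam)) < \<infinity>"
    using min[of w] by (rule order_le_less_trans[rotated])
  moreover have "f x \<noteq> -\<infinity>" using assms(1) by (simp add: proper_fun_def)
  ultimately show ?thesis using that by (cases "f x") auto
qed

lemma prox_difference_quotient_bound:
  fixes A B C G U lam t :: real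
  assumes "G + A / (2 * lam) \<le> (1 - t) * G + t * U + (A + 2 * t * B + t\<^sup>2 * C) / (2 * lam)"
    and lam: "0 < lam" and t: "0 < t"
  shows "- t * (C / (2 * lam)) \<le> U - G + B / lam"
proof -
  have "(1 - t) * G + t * U + (A + 2 * t * B + t\<^sup>2 * C) / (2 * lam) - (G + A / (2 * lam))
      = t * (2 * lam * (U - G) + 2 * B + t * C) / (2 * lam)"
    using lam by (simp add: field_simps power2_eq_square)
  with assms(1) have "0 \<le> t * (2 * lam * (U - G) + 2 * B + t * C) / (2 * lam)"
    by linarith
  then have "0 \<le> 2 * lam * (U - G) + 2 * B + t * C"
    using lam t by (simp add: zero_le_divide_iff zero_le_mult_iff)
  then show ?thesis
    using lam by (simp add: field_simps)
qed

lemma prox_point_subgradient: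
  fixes f :: "'a::real_inner \<Rightarrow> ereal"
  assumes f: "proper_fun f" "convex_fun f" and lam: "0 < lam"
    and min: "\<And>u. f x + ereal ((norm (x - z))\<^sup>2 / (2 * lam))
                    \<le> f u + ereal ((norm (u - z))\<^sup>2 / (2 * lam))"
  shows "f x + ereal (inner ((1 / lam) *\<^sub>R (z - x)) (u - x)) \<le> f u"
proof -
  obtain G where G: "f x = ereal G"
    using proper_fun_finite_at_prox_point[OF f(1) min] by blast
  show ?thesis
  proof (cases "f u")
    case PInf then show ?thesis by (simp add: G)
  next
    case MInf then show ?thesis using f(1) by (simp add: proper_fun_def)
  next
    case (real U)
    define s where "s = (1 / lam) *\<^sub>R (z - x)"
    define A B C where "A = (norm (x - z))\<^sup>2" and "B = inner (x - z) (u - x)"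
      and "C = (norm (u - x))\<^sup>2"
    have "- t * (C / (2 * lam)) \<le> U - G - inner s (u - x)" if t: "0 < t" "t < 1" for t
    proof -
      define ut where "ut = (1 - t) *\<^sub>R x + t *\<^sub>R u"
      have "f ut \<le> ereal (1 - t) * f x + ereal t * f u"
        using f(2) t unfolding convex_fun_def ut_def by blast
      then have convex: "f ut \<le> ereal ((1 - t) * G + t * U)"
        by (simp add: G real)
      have "ut - z = (x - z) + t *\<^sub>R (u - x)" by (simp add: ut_def algebra_simps)
      then have ut_dist: "(norm (ut - z))\<^sup>2 = A + 2 * t * B + t\<^sup>2 * C"
        unfolding A_def B_def C_def by (simp only: norm_add_scaleR_power2)
      have "ereal (G + A / (2 * lam)) \<le> f ut + ereal ((norm (ut - z))\<^sup>2 / (2 * lam))"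
        using min[of ut] by (simp add: G A_def)
      also have "\<dots> \<le> ereal ((1 - t) * G + t * U) + ereal ((norm (ut - z))\<^sup>2 / (2 * lam))"
        using convex by (rule add_right_mono)
      finally have "G + A / (2 * lam) \<le> (1 - t) * G + t * U + (A + 2 * t * B + t\<^sup>2 * C) / (2 * lam)"
        by (simp add: ut_dist)
      then have "- t * (C / (2 * lam)) \<le> U - G + B / lam"
        using lam t(1) by (rule prox_difference_quotient_bound)
      moreover have "inner s (u - x) = - B / lam"
        by (simp add: s_def B_def inner_diff_left minus_divide_left)
      ultimately show ?thesis by simp
    qed
    then have "0 \<le> U - G - inner s (u - x)" by (rule nonneg_if_ge_vanishing)
    then show ?thesis by (simp add: G real s_def)
  qed
qed

lemma eps_subdiff_of_subgradient_of_minorant: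
  fixes f g :: "'a::real_inner \<Rightarrow> ereal"
  assumes minorant: "\<And>u. g u \<le> f u"
    and subgrad: "\<And>u. g x + ereal (inner s (u - x)) \<le> g u"
    and G: "g x = ereal G" and P: "f y = ereal P"
  shows "s \<in> eps_subdiff f (P - G - inner s (y - x)) y"
  unfolding eps_subdiff_def
proof safe
  fix u
  have "f y + ereal (inner s (u - y) - (P - G - inner s (y - x))) = g x + ereal (inner s (u - x))"
    by (simp add: G P inner_diff_right)
  also have "\<dots> \<le> f u" using subgrad minorant by (rule order_trans)
  finally show "f y + ereal (inner s (u - y) - (P - G - inner s (y - x))) \<le> f u" .
qed

lemma eps_subdiff_nonneg:
  assumes "s \<in> eps_subdiff f \<eta> y" and "f y = ereal P"
  shows "0 \<le> \<eta>"
  using assms by (auto simp: eps_subdiff_def dest: spec[of _ y])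

lemma prox_gap_identity:
  fixes x y z :: "'a::real_inner"
  assumes "lam \<noteq> 0"
  shows "2 * lam * (P - G - inner ((1 / lam) *\<^sub>R (z - x)) (y - x))
    = 2 * lam * (P + chi / (2 * lam) * (norm (y - z))\<^sup>2 - (G + (norm (x - z))\<^sup>2 / (2 * lam)))
      - (norm (y - x))\<^sup>2 + (1 - chi) * (norm (y - z))\<^sup>2"
proof -
  have "(norm (y - z))\<^sup>2 = (norm (x - z))\<^sup>2 + 2 * inner (x - z) (y - x) + (norm (y - x))\<^sup>2"
    using norm_add_scaleR_power2[of "x - z" 1 "y - x"] by simp
  then show ?thesis
    using assms by (simp add: algebra_simps inner_diff_left)
qed

theorem lemma3p3:
  fixes \<phi> \<Gamma> :: "'a::euclidean_space \<Rightarrow> ereal"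
    and xm x y :: 'a and chi eps lam :: real
  assumes phi: "proper_fun \<phi>" "lsc_fun \<phi>" "convex_fun \<phi>"
    and xm: "xm \<in> edom \<phi>"
    and chi_rng: "0 \<le> chi" "chi < 1"
    and eps_pos: "0 < eps"
    and xy: "x \<in> edom \<phi>" "y \<in> edom \<phi>"
    and Gam: "proper_fun \<Gamma>" "lsc_fun \<Gamma>" "convex_fun \<Gamma>"
    and Gam_le: "\<And>u. \<Gamma> u \<le> \<phi> u"
    and lam_pos: "0 < lam"
    and xmin: "\<And>u. \<Gamma> x + ereal ((norm (x - xm))\<^sup>2 / (2 * lam))
                    \<le> \<Gamma> u + ereal ((norm (u - xm))\<^sup>2 / (2 * lam))"
    and gap: "\<phi> y + ereal (chi / (2 * lam) * (norm (y - xm))\<^sup>2)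
              - (\<Gamma> x + ereal ((norm (x - xm))\<^sup>2 / (2 * lam))) \<le> ereal eps"
  shows "let s = (1 / lam) *\<^sub>R (xm - x);
             \<eta> = real_of_ereal (\<phi> y) - real_of_ereal (\<Gamma> x) - inner s (y - x)
         in (\<forall>u. \<Gamma> u \<ge> \<Gamma> x + ereal (inner s (u - x)))
            \<and> s \<in> eps_subdiff \<phi> \<eta> y
            \<and> 0 \<le> 2 * lam * \<eta>
            \<and> 2 * lam * \<eta> \<le> 2 * lam * eps - (norm (y - x))\<^sup>2 + (1 - chi) * (norm (y - xm))\<^sup>2"
proof -
  define s where "s = (1 / lam) *\<^sub>R (xm - x)"
  obtain G where G: "\<Gamma> x = ereal G"
    using proper_fun_finite_at_prox_point[OF Gam(1) xmin] .
  obtain P where P: "\<phi> y = ereal P"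
    using xy(2) phi(1) by (cases "\<phi> y") (auto simp: edom_def proper_fun_def)
  define \<eta> where "\<eta> = P - G - inner s (y - x)"
  have subgrad: "\<And>u. \<Gamma> x + ereal (inner s (u - x)) \<le> \<Gamma> u"
    unfolding s_def by (rule prox_point_subgradient[OF Gam(1,3) lam_pos xmin])
  have eps_sub: "s \<in> eps_subdiff \<phi> \<eta> y"
    unfolding \<eta>_def by (rule eps_subdiff_of_subgradient_of_minorant[OF Gam_le subgrad G P])
  have "0 \<le> \<eta>" by (rule eps_subdiff_nonneg[OF eps_sub P])
  have "2 * lam * \<eta>
    = 2 * lam * (P + chi / (2 * lam) * (norm (y - xm))\<^sup>2 - (G + (norm (x - xm))\<^sup>2 / (2 * lam)))
      - (norm (y - x))\<^sup>2 + (1 - chi) * (norm (y - xm))\<^sup>2"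
    unfolding \<eta>_def s_def using lam_pos by (intro prox_gap_identity) simp
  also have "\<dots> \<le> 2 * lam * eps - (norm (y - x))\<^sup>2 + (1 - chi) * (norm (y - xm))\<^sup>2"
    using gap lam_pos by (simp add: G P)
  finally have "2 * lam * \<eta> \<le> 2 * lam * eps - (norm (y - x))\<^sup>2 + (1 - chi) * (norm (y - xm))\<^sup>2" .
  with subgrad eps_sub \<open>0 \<le> \<eta>\<close> lam_pos show ?thesis
    by (simp add: Let_def G P flip: s_def \<eta>_def)
qed

end
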